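(* Under the hypotheses of the preceding statement (fixed $q\in\{1,2,\ldots\}$ and $\alpha>0$; $n,p\to\infty$ with $n/p\to\gamma\in[0,\infty]$, $m/p\to\kappa\in[1,\infty)$, $m\ge p$; data i.i.d. $N_p(0,I_p)$; and $(\lambda_{\max}(S)-\mu_{n,p})/\sigma_{n,p}$ converging in distribution), the largest eigenvalue $\lambda^{(q)}_{\max}$ of the power inverse Wishart MAP estimator with prior parameters $(\alpha I_p,m,q)$ satisfies $$\lambda^{(q)}_{\max}\xrightarrow{P}1+\frac{2\sqrt\gamma-q\kappa}{1+\gamma+q\kappa},$$ where the fraction is interpreted as $0$ when $\gamma=\infty$.
   Context: $S$ is the sample covariance $\frac1n\sum_i(X_i-\bar X)(X_i-\bar X)^\top$; $\mu_{n,p}=(1+\sqrt{p/n})^2$, $\sigma_{n,p}=\frac{\sqrt n+\sqrt p}{n}(n^{-1/2}+p^{-1/2})^{1/3}$. With $N=n+p+qm+1$, the MAP estimator has the same eigenvectors as $S$ and maps each eigenvalue $s$ of $S$ to the unique positive solution $\mu$ of $N\mu^q-ns\mu^{q-1}-q\alpha^q=0$. *)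

theory Defs
  imports "HOL-Probability.Probability" "Jordan_Normal_Form.Char_Poly"
begin

text \<open>Data: row i < n, coordinate j < p, given as x i j.\<close>

definition sample_mean :: "nat \<Rightarrow> (nat \<Rightarrow> nat \<Rightarrow> real) \<Rightarrow> nat \<Rightarrow> real" where
  "sample_mean n x j = (\<Sum>i<n. x i j) / real n"

definition sample_cov :: "nat \<Rightarrow> nat \<Rightarrow> (nat \<Rightarrow> nat \<Rightarrow> real) \<Rightarrow> real mat" where
  "sample_cov n p x = mat p p (\<lambda>(j, l). (1 / real n) *
      (\<Sum>i<n. (x i j - sample_mean n x j) * (x i l - sample_mean n x l)))"

definition lambda_max :: "real mat \<Rightarrow> real" where
  "lambda_max A = Max {s. eigenvalue A s}"

definition mu_np :: "nat \<Rightarrow> nat \<Rightarrow> real" where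
  "mu_np n p = (1 + sqrt (real p / real n))^2"

definition sigma_np :: "nat \<Rightarrow> nat \<Rightarrow> real" where
  "sigma_np n p = (sqrt (real n) + sqrt (real p)) / real n
     * (1 / sqrt (real n) + 1 / sqrt (real p)) powr (1/3)"

text \<open>Eigenvalue map of the power inverse Wishart MAP estimator with prior (alpha I_p, m, q):
  s is mapped to the unique positive root mu of N mu^q - n s mu^(q-1) - q alpha^q = 0,
  where N = n + p + q m + 1.\<close>
definition map_eig :: "nat \<Rightarrow> nat \<Rightarrow> nat \<Rightarrow> nat \<Rightarrow> real \<Rightarrow> real \<Rightarrow> real" where
  "map_eig n p m q \<alpha> s = (THE \<mu>. \<mu> > 0 \<and>
     real (n + p + q * m + 1) * \<mu> ^ q - real n * s * \<mu> ^ (q - 1) - real q * \<alpha> ^ q = 0)"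

text \<open>The MAP estimator shares eigenvectors with S, so its eigenvalues are the images of
  the eigenvalues of S; this is its largest eigenvalue.\<close>
definition map_lambda_max :: "nat \<Rightarrow> nat \<Rightarrow> nat \<Rightarrow> nat \<Rightarrow> real \<Rightarrow> real mat \<Rightarrow> real" where
  "map_lambda_max n p m q \<alpha> S = Max (map_eig n p m q \<alpha> ` {s. eigenvalue S s})"

definition limit_const :: "nat \<Rightarrow> ereal \<Rightarrow> real \<Rightarrow> real" where
  "limit_const q \<gamma> \<kappa> = (if \<gamma> = \<infinity> then 1 else
     1 + (2 * sqrt (real_of_ereal \<gamma>) - real q * \<kappa>) / (1 + real_of_ereal \<gamma> + real q * \<kappa>))"

end

theory Submission
  imports Defs
begin

(*
  Write N = n + p + q m + 1 and let lambda_max be the largest eigenvalue of the sample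
  covariance S.  The proof separates a deterministic part from a probabilistic one.

  1. The scalar equation N mu^q - a mu^(q-1) - c = 0 (a >= 0, c > 0) has a unique positive
     root, and it lies in (a/N, a/N + t] as soon as N t^q >= c.  Hence each eigenvalue s >= 0
     of S is mapped into (n s/N, n s/N + t].
  2. S is a real symmetric positive semidefinite matrix: its spectrum is finite, nonempty and
     nonnegative.  Together with 1 this gives |lambda_max^(q) - n lambda_max/N| <= t.
  3. Writing lambda_max = mu_np + sigma_np Z, we have n lambda_max/N = a_k + b_k Z where the
     centering a_k = n mu_np/N tends to the limit constant and the scale b_k = n sigma_np/N
     tends to 0.  So on {|Z| <= K} the estimator is eventually within epsilon of the limit.
  4. Since Z converges in distribution it is tight: P(|Z| <= K) is eventually close to 1
     for a suitable K, which turns 3 into convergence in probability.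
*)

no_notation Finite_Cartesian_Product.vec.vec_nth (infixl \<open>$\<close> 90)

section \<open>The scalar equation defining the eigenvalue map\<close>

text \<open>The equation factors as mu^(q-1) (N mu - a) = c, a product of two increasing factors.\<close>
lemma root_equation_factored:
  fixes N a c \<mu> :: real and q :: nat
  assumes "q \<ge> 1"
  shows "N * \<mu> ^ q - a * \<mu> ^ (q - 1) - c = \<mu> ^ (q - 1) * (N * \<mu> - a) - c"
  using assms by (cases q) (auto simp: algebra_simps)

text \<open>Strict monotonicity of such products; this drives both uniqueness and the upper bound.\<close>
lemma power_mult_strict_mono:
  fixes x y u v :: real
  assumes "0 < x" "x \<le> y" "0 < u" "u < v"
  shows "x ^ k * u < y ^ k * v"
proof -
  have "x ^ k \<le> y ^ k" using assms by (intro power_mono) auto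
  then show ?thesis using assms by (intro mult_le_less_imp_less) auto
qed

lemma positive_root_bounds:
  fixes N a c \<mu> t :: real and q :: nat
  assumes N: "N > 0" and a: "a \<ge> 0" and c: "c > 0" and q: "q \<ge> 1"
    and \<mu>: "\<mu> > 0" and root: "N * \<mu> ^ q - a * \<mu> ^ (q - 1) - c = 0"
  shows "a / N < \<mu>" and "t > 0 \<Longrightarrow> c \<le> N * t ^ q \<Longrightarrow> \<mu> \<le> a / N + t"
proof -
  have eq: "\<mu> ^ (q - 1) * (N * \<mu> - a) = c" using root root_equation_factored[OF q] by simp
  have shift_pos: "N * \<mu> - a > 0" using eq c \<mu> by (metis zero_less_mult_pos zero_less_power)
  then show "a / N < \<mu>" using N by (simp add: field_simps)
  assume t: "t > 0" and tq: "c \<le> N * t ^ q"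
  show "\<mu> \<le> a / N + t"
  proof (rule ccontr)
    assume "\<not> \<mu> \<le> a / N + t"
    then have shift: "N * t < N * \<mu> - a" using N by (simp add: field_simps)
    then have "N * t < N * \<mu>" using a by linarith
    then have "t \<le> \<mu>" using N by (simp add: mult_less_cancel_left_pos)
    then have "t ^ (q - 1) * (N * t) < \<mu> ^ (q - 1) * (N * \<mu> - a)"
      using t N shift by (intro power_mult_strict_mono) auto
    moreover have "t ^ (q - 1) * (N * t) = N * t ^ q" using q by (cases q) auto
    ultimately show False using eq tq by linarith
  qed
qed

text \<open>Existence (intermediate value theorem on [a/N, a/N + 1 + c/N]) and uniqueness (strict
  monotonicity above a/N) of the positive root; this makes the definition of map_eig meaningful.\<close>
lemma positive_root_unique:
  fixes N a c :: real and q :: nat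
  assumes N: "N > 0" and a: "a \<ge> 0" and c: "c > 0" and q: "q \<ge> 1"
  shows "\<exists>!\<mu>. \<mu> > 0 \<and> N * \<mu> ^ q - a * \<mu> ^ (q - 1) - c = 0"
proof -
  define f where "f = (\<lambda>\<mu>::real. \<mu> ^ (q - 1) * (N * \<mu> - a) - c)"
  have f_eq: "N * \<mu> ^ q - a * \<mu> ^ (q - 1) - c = f \<mu>" for \<mu>
    using root_equation_factored[OF q] by (simp add: f_def)
  define hi where "hi = a / N + 1 + c / N"
  have lo_nonneg: "a / N \<ge> 0" using a N by simp
  have f_lo: "f (a / N) < 0" using N c by (simp add: f_def)
  have f_hi: "f hi \<ge> 0"
  proof -
    have "1 \<le> hi ^ (q - 1)" using lo_nonneg N c by (intro one_le_power) (simp add: hi_def)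
    moreover have "N * hi - a = N + c" using N by (simp add: hi_def field_simps)
    ultimately have "1 * (N + c) \<le> hi ^ (q - 1) * (N * hi - a)"
      using N c by (metis mult_right_mono add_nonneg_nonneg less_imp_le)
    then show ?thesis using N by (simp add: f_def)
  qed
  have "\<exists>r. a / N \<le> r \<and> r \<le> hi \<and> f r = 0"
    using f_lo f_hi N c lo_nonneg
    by (intro IVT) (auto simp: f_def hi_def intro!: continuous_intros)
  then obtain r where r: "a / N \<le> r" "f r = 0" by blast
  have r_pos: "r > 0" using r f_lo lo_nonneg by (cases "r = a / N") auto
  have not_less: "\<not> x < y" if "x > 0" "f x = 0" "y > 0" "f y = 0" for x y
  proof
    assume "x < y"
    have "N * x - a > 0"
      using positive_root_bounds(1)[OF N a c q, of x] that f_eq N by (simp add: field_simps)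
    then have "x ^ (q - 1) * (N * x - a) < y ^ (q - 1) * (N * y - a)"
      using \<open>x < y\<close> that N by (intro power_mult_strict_mono) auto
    then show False using that by (simp add: f_def)
  qed
  show ?thesis unfolding f_eq
  proof (rule ex1I[of _ r])
    show "r > 0 \<and> f r = 0" using r_pos r(2) by simp
    fix \<mu> assume "\<mu> > 0 \<and> f \<mu> = 0"
    then have "\<not> \<mu> < r" "\<not> r < \<mu>" using not_less r_pos r(2) by blast+
    then show "\<mu> = r" by linarith
  qed
qed

lemma map_eig_bounds:
  fixes s t \<alpha> :: real and n p m q :: nat
  assumes q: "q \<ge> 1" and \<alpha>: "\<alpha> > 0" and s: "s \<ge> 0"
  shows "real n * s / real (n + p + q * m + 1) < map_eig n p m q \<alpha> s"
    and "t > 0 \<Longrightarrow> real q * \<alpha> ^ q \<le> real (n + p + q * m + 1) * t ^ q \<Longrightarrow>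
          map_eig n p m q \<alpha> s \<le> real n * s / real (n + p + q * m + 1) + t"
proof -
  define N where "N = real (n + p + q * m + 1)"
  have N: "N > 0" unfolding N_def by (rule of_nat_0_less_iff[THEN iffD2]) simp
  have a: "real n * s \<ge> 0" using s by simp
  have c: "real q * \<alpha> ^ q > 0" using q \<alpha> by simp
  have "map_eig n p m q \<alpha> s > 0 \<and>
      N * map_eig n p m q \<alpha> s ^ q - real n * s * map_eig n p m q \<alpha> s ^ (q - 1) - real q * \<alpha> ^ q = 0"
    unfolding map_eig_def N_def[symmetric]
    by (rule theI'[OF positive_root_unique[OF N a c q]])
  note root = positive_root_bounds[OF N a c q conjunct1[OF this] conjunct2[OF this]]
  show "real n * s / real (n + p + q * m + 1) < map_eig n p m q \<alpha> s"
    using root(1) by (simp add: N_def)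
  show "t > 0 \<Longrightarrow> real q * \<alpha> ^ q \<le> real (n + p + q * m + 1) * t ^ q \<Longrightarrow>
          map_eig n p m q \<alpha> s \<le> real n * s / real (n + p + q * m + 1) + t"
    using root(2)[of t] by (simp add: N_def)
qed

section \<open>The spectrum of the sample covariance matrix\<close>

lemma eigenvector_entry:
  fixes A :: "'a::comm_ring_1 mat"
  assumes A: "A \<in> carrier_mat d d" and v: "v \<in> carrier_vec d"
    and e: "A *\<^sub>v v = k \<cdot>\<^sub>v v" and j: "j < d"
  shows "(\<Sum>l<d. A $$ (j, l) * v $ l) = k * v $ j"
proof -
  have "(A *\<^sub>v v) $ j = (\<Sum>l<d. A $$ (j, l) * v $ l)"
    using A v j by (simp add: scalar_prod_def atLeast0LessThan)
  then show ?thesis using e v j by (metis index_smult_vec(1) carrier_vecD)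
qed

lemma nonzero_vec_has_nonzero_entry:
  assumes v: "v \<in> carrier_vec d" and nz: "v \<noteq> 0\<^sub>v d"
  shows "\<exists>j<d. v $ j \<noteq> 0"
  using assms by (metis eq_vecI carrier_vecD index_zero_vec(1,2))

lemma sum_squares_pos:
  fixes w :: "nat \<Rightarrow> real"
  assumes "j0 < d" "w j0 \<noteq> 0"
  shows "(\<Sum>j<d. (w j)\<^sup>2) > 0"
proof -
  have "(w j0)\<^sup>2 \<le> (\<Sum>j<d. (w j)\<^sup>2)" using assms by (intro member_le_sum) auto
  moreover have "(w j0)\<^sup>2 > 0" using assms by simp
  ultimately show ?thesis by linarith
qed

text \<open>Eigenvalues are roots of the (nonzero) characteristic polynomial, hence finitely many.\<close>
lemma eigenvalues_finite:
  fixes A :: "real mat"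
  assumes A: "A \<in> carrier_mat d d"
  shows "finite {s. eigenvalue A s}"
proof -
  have "char_poly A \<noteq> 0" using degree_monic_char_poly[OF A] by auto
  then have "finite {s. poly (char_poly A) s = 0}" by (rule poly_roots_finite)
  then show ?thesis using eigenvalue_root_char_poly[OF A] by simp
qed

lemma symmetric_form_real:
  fixes A :: "real mat" and w :: "nat \<Rightarrow> complex"
  assumes sym: "\<And>j l. j < d \<Longrightarrow> l < d \<Longrightarrow> A $$ (j, l) = A $$ (l, j)"
  shows "cnj (\<Sum>j<d. \<Sum>l<d. cnj (w j) * complex_of_real (A $$ (j, l)) * w l)
       = (\<Sum>j<d. \<Sum>l<d. cnj (w j) * complex_of_real (A $$ (j, l)) * w l)"
proof -
  have "cnj (\<Sum>j<d. \<Sum>l<d. cnj (w j) * complex_of_real (A $$ (j, l)) * w l)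
      = (\<Sum>j<d. \<Sum>l<d. w j * complex_of_real (A $$ (j, l)) * cnj (w l))"
    by simp
  also have "\<dots> = (\<Sum>l<d. \<Sum>j<d. w j * complex_of_real (A $$ (j, l)) * cnj (w l))"
    by (rule sum.swap)
  also have "\<dots> = (\<Sum>j<d. \<Sum>l<d. cnj (w j) * complex_of_real (A $$ (j, l)) * w l)"
    by (intro sum.cong refl) (simp add: sym mult.commute mult.left_commute)
  finally show ?thesis .
qed

text \<open>A real symmetric matrix of positive dimension has a real eigenvalue: a complex
  eigenvalue z with eigenvector w satisfies conj(w)^T A w = z |w|^2 with real left side.\<close>
lemma symmetric_has_eigenvalue:
  fixes A :: "real mat"
  assumes A: "A \<in> carrier_mat d d" and d: "d \<ge> 1"
    and sym: "\<And>j l. j < d \<Longrightarrow> l < d \<Longrightarrow> A $$ (j, l) = A $$ (l, j)"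
  shows "\<exists>s. eigenvalue A s"
proof -
  define B where "B = map_mat complex_of_real A"
  have B: "B \<in> carrier_mat d d" using A by (simp add: B_def)
  have char_B: "char_poly B = map_poly complex_of_real (char_poly A)"
    unfolding B_def by (rule of_real_hom.char_poly_hom[OF A])
  have "degree (char_poly B) = d" using degree_monic_char_poly[OF B] by simp
  then obtain z where z: "poly (char_poly B) z = 0"
    using d fundamental_theorem_of_algebra constant_degree by (metis not_one_le_zero)
  then obtain v where v: "v \<in> carrier_vec d" "v \<noteq> 0\<^sub>v d" "B *\<^sub>v v = z \<cdot>\<^sub>v v"
    using eigenvalue_root_char_poly[OF B] B unfolding eigenvalue_def eigenvector_def by auto
  define w where "w = (\<lambda>j. v $ j)"
  have row: "(\<Sum>l<d. complex_of_real (A $$ (j, l)) * w l) = z * w j" if "j < d" for j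
    using eigenvector_entry[OF B v(1) v(3) that] A that by (simp add: B_def w_def)
  define T where "T = (\<Sum>j<d. \<Sum>l<d. cnj (w j) * complex_of_real (A $$ (j, l)) * w l)"
  define R where "R = (\<Sum>j<d. (cmod (w j))\<^sup>2)"
  have T_eq: "T = z * complex_of_real R"
  proof -
    have "T = (\<Sum>j<d. cnj (w j) * (\<Sum>l<d. complex_of_real (A $$ (j, l)) * w l))"
      unfolding T_def by (simp add: sum_distrib_left mult.assoc)
    also have "\<dots> = (\<Sum>j<d. z * (cnj (w j) * w j))" using row by (simp add: algebra_simps)
    also have "\<dots> = z * complex_of_real R"
      unfolding R_def of_real_sum sum_distrib_left
      by (intro sum.cong refl) (simp add: complex_norm_square mult.commute del: of_real_power)
    finally show ?thesis .
  qed
  have T_real: "cnj T = T" unfolding T_def using sym by (rule symmetric_form_real)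
  obtain j0 where "j0 < d" "w j0 \<noteq> 0" using nonzero_vec_has_nonzero_entry[OF v(1,2)] w_def by auto
  then have "R > 0" unfolding R_def using sum_squares_pos[of j0 d "\<lambda>j. cmod (w j)"] by simp
  then have "cnj z = z" using T_real T_eq by (auto simp: mult_right_cancel)
  then have z_real: "z = complex_of_real (Re z)" by (simp add: complex_eq_iff)
  have "complex_of_real (poly (char_poly A) (Re z)) = 0"
    using z z_real of_real_hom.poly_map_poly[of "char_poly A"] char_B by metis
  then show ?thesis using eigenvalue_root_char_poly[OF A] by auto
qed

lemma sample_cov_carrier: "sample_cov n p x \<in> carrier_mat p p"
  by (simp add: sample_cov_def)

lemma sample_cov_entry:
  assumes "j < p" "l < p"
  shows "sample_cov n p x $$ (j, l) = (1 / real n) *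
      (\<Sum>i<n. (x i j - sample_mean n x j) * (x i l - sample_mean n x l))"
  using assms by (simp add: sample_cov_def)

lemma sample_cov_symmetric:
  assumes "j < p" "l < p"
  shows "sample_cov n p x $$ (j, l) = sample_cov n p x $$ (l, j)"
  using assms by (simp add: sample_cov_entry mult.commute)

text \<open>Positive semidefiniteness: for an eigenvector w, n w^T S w is a sum of squares.\<close>
lemma sample_cov_eigenvalue_nonneg:
  assumes n: "n \<ge> 1" and e: "eigenvalue (sample_cov n p x) s"
  shows "s \<ge> 0"
proof -
  define A where "A = sample_cov n p x"
  have A: "A \<in> carrier_mat p p" by (simp add: A_def sample_cov_carrier)
  obtain v where v: "v \<in> carrier_vec p" "v \<noteq> 0\<^sub>v p" "A *\<^sub>v v = s \<cdot>\<^sub>v v"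
    using e A unfolding eigenvalue_def eigenvector_def A_def by auto
  define c where "c = (\<lambda>i j. x i j - sample_mean n x j)"
  define w where "w = (\<lambda>j. v $ j)"
  define Q where "Q = (\<Sum>j<p. w j * (\<Sum>l<p. A $$ (j, l) * w l))"
  have Q_eig: "Q = s * (\<Sum>j<p. (w j)\<^sup>2)"
    unfolding Q_def using eigenvector_entry[OF A v(1) v(3)]
    by (simp add: w_def sum_distrib_left power2_eq_square algebra_simps)
  have "0 \<le> (\<Sum>i<n. (\<Sum>j<p. w j * c i j)\<^sup>2)" by (intro sum_nonneg) simp
  also have "\<dots> = (\<Sum>i<n. \<Sum>j<p. \<Sum>l<p. w j * c i j * (c i l * w l))"
    by (simp add: power2_eq_square sum_product mult.commute mult.left_commute)
  also have "\<dots> = (\<Sum>j<p. \<Sum>i<n. \<Sum>l<p. w j * c i j * (c i l * w l))"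
    by (rule sum.swap)
  also have "\<dots> = (\<Sum>j<p. \<Sum>l<p. \<Sum>i<n. w j * c i j * (c i l * w l))"
    by (intro sum.cong refl sum.swap)
  also have "\<dots> = real n * Q"
    unfolding Q_def sum_distrib_left
    by (intro sum.cong refl)
      (simp add: A_def sample_cov_entry c_def sum_distrib_left sum_distrib_right n mult.commute mult.left_commute)
  finally have "real n * Q \<ge> 0" .
  then have Q_nonneg: "Q \<ge> 0" using n by (simp add: zero_le_mult_iff)
  obtain j0 where "j0 < p" "w j0 \<noteq> 0" using nonzero_vec_has_nonzero_entry[OF v(1,2)] w_def by auto
  then have "(\<Sum>j<p. (w j)\<^sup>2) > 0" by (rule sum_squares_pos)
  then show ?thesis using Q_nonneg Q_eig by (simp add: zero_le_mult_iff)
qed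

text \<open>Deterministic comparison: the largest MAP eigenvalue is within t of n lambda_max(S)/N,
  because the eigenvalue map sends each s >= 0 into (n s/N, n s/N + t].\<close>
lemma map_lambda_max_close:
  fixes t \<alpha> :: real and n p m q :: nat
  assumes q: "q \<ge> 1" and \<alpha>: "\<alpha> > 0" and n: "n \<ge> 1" and p: "p \<ge> 1" and t: "t > 0"
    and tq: "real q * \<alpha> ^ q \<le> real (n + p + q * m + 1) * t ^ q"
  shows "\<bar>map_lambda_max n p m q \<alpha> (sample_cov n p x)
           - real n * lambda_max (sample_cov n p x) / real (n + p + q * m + 1)\<bar> \<le> t"
proof -
  define N where "N = real (n + p + q * m + 1)"
  define E where "E = {s. eigenvalue (sample_cov n p x) s}"
  define g where "g = map_eig n p m q \<alpha>"
  have fin: "finite E" unfolding E_def by (rule eigenvalues_finite[OF sample_cov_carrier])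
  have ne: "E \<noteq> {}"
    unfolding E_def using symmetric_has_eigenvalue[OF sample_cov_carrier p sample_cov_symmetric] by auto
  have nonneg: "s \<ge> 0" if "s \<in> E" for s
    using that sample_cov_eigenvalue_nonneg[OF n] unfolding E_def by auto
  have "N > 0" unfolding N_def by (rule of_nat_0_less_iff[THEN iffD2]) simp
  define L where "L = Max E"
  have L: "L \<in> E" "\<And>s. s \<in> E \<Longrightarrow> s \<le> L" using fin ne by (auto simp: L_def)
  have "Max (g ` E) \<in> g ` E" using fin ne by (intro Max_in) auto
  then obtain s0 where s0: "s0 \<in> E" "Max (g ` E) = g s0" by auto
  have "Max (g ` E) \<le> real n * s0 / N + t"
    using s0 map_eig_bounds(2)[OF q \<alpha> nonneg[OF s0(1)] t tq] by (simp add: g_def N_def)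
  also have "\<dots> \<le> real n * L / N + t"
    using L(2)[OF s0(1)] \<open>N > 0\<close> by (intro add_right_mono divide_right_mono mult_left_mono) auto
  finally have upper: "Max (g ` E) \<le> real n * L / N + t" .
  have "real n * L / N < g L" using map_eig_bounds(1)[OF q \<alpha> nonneg[OF L(1)]] by (simp add: g_def N_def)
  also have "g L \<le> Max (g ` E)" using fin L(1) by simp
  finally have lower: "real n * L / N < Max (g ` E)" .
  show ?thesis
    using upper lower unfolding map_lambda_max_def lambda_max_def E_def[symmetric] g_def[symmetric]
      L_def[symmetric] N_def[symmetric] by simp
qed

section \<open>Asymptotics of the centering and scaling constants\<close>

lemma inverse_real_tendsto_zero:
  assumes "filterlim n at_top sequentially"
  shows "((\<lambda>k. 1 / real (n k)) \<longlongrightarrow> 0) sequentially"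
  using tendsto_inverse_0_at_top[OF filterlim_compose[OF filterlim_real_sequentially assms]]
  by (simp add: inverse_eq_divide)

lemma inverse_sqrt_tendsto_zero:
  assumes "filterlim n at_top sequentially"
  shows "((\<lambda>k. 1 / sqrt (real (n k))) \<longlongrightarrow> 0) sequentially"
  using tendsto_real_sqrt[OF inverse_real_tendsto_zero[OF assms]] by (simp add: real_sqrt_divide)

text \<open>The limiting share rho = lim n/(n+p) of the first dimension, i.e. gamma/(1+gamma).\<close>
definition limit_share :: "ereal \<Rightarrow> real" where
  "limit_share \<gamma> = (if \<gamma> = \<infinity> then 1 else real_of_ereal \<gamma> / (1 + real_of_ereal \<gamma>))"

lemma limit_share_le_1: "\<gamma> \<ge> 0 \<Longrightarrow> limit_share \<gamma> \<le> 1"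
  by (cases \<gamma>) (auto simp: limit_share_def)

text \<open>n/(n+p) = 1 - 1/(1 + n/p) converges to the limiting share, including the case gamma = oo.\<close>
lemma share_tendsto:
  fixes n p :: "nat \<Rightarrow> nat" and \<gamma> :: ereal
  assumes p_lim: "filterlim p at_top sequentially" and gamma_nonneg: "\<gamma> \<ge> 0"
    and np_lim: "((\<lambda>k. ereal (real (n k) / real (p k))) \<longlongrightarrow> \<gamma>) sequentially"
  shows "((\<lambda>k. real (n k) / real (n k + p k)) \<longlongrightarrow> limit_share \<gamma>) sequentially"
proof -
  define r where "r = (\<lambda>k. real (n k) / real (p k))"
  have "eventually (\<lambda>k. p k \<ge> 1) sequentially" using p_lim by (simp add: filterlim_at_top)
  then have share: "eventually (\<lambda>k. 1 - 1 / (1 + r k) = real (n k) / real (n k + p k)) sequentially"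
    by eventually_elim (simp add: r_def field_simps)
  have "((\<lambda>k. 1 - 1 / (1 + r k)) \<longlongrightarrow> limit_share \<gamma>) sequentially"
  proof (cases "\<gamma> = \<infinity>")
    case True
    then have "filterlim (\<lambda>k. 1 + r k) at_top sequentially"
      using np_lim by (intro filterlim_tendsto_add_at_top[OF tendsto_const])
        (simp add: r_def tendsto_PInfty_eq_at_top)
    then show ?thesis
      using True tendsto_inverse_0_at_top tendsto_diff[OF tendsto_const, of _ 0 sequentially 1]
      by (fastforce simp: limit_share_def inverse_eq_divide)
  next
    case False
    define g where "g = real_of_ereal \<gamma>"
    have \<gamma>: "\<gamma> = ereal g" and g: "g \<ge> 0" using False gamma_nonneg by (cases \<gamma>; auto simp: g_def)+
    have "(r \<longlongrightarrow> g) sequentially" using np_lim \<gamma> by (simp add: r_def)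
    then have "((\<lambda>k. 1 - 1 / (1 + r k)) \<longlongrightarrow> 1 - 1 / (1 + g)) sequentially"
      using g by (intro tendsto_intros) auto
    moreover have "1 - 1 / (1 + g) = limit_share \<gamma>" using g False by (simp add: limit_share_def g_def field_simps)
    ultimately show ?thesis by simp
  qed
  then show ?thesis using share by (rule Lim_transform_eventually)
qed

lemma mu_np_scaled:
  assumes "n \<ge> 1" "p \<ge> 1"
  shows "real n * mu_np n p = real n + real p + 2 * sqrt (real n * real p)"
proof -
  have "real n * sqrt (real p / real n) = sqrt (real n * real p)"
    using assms by (simp add: real_sqrt_divide real_sqrt_mult field_simps real_div_sqrt)
  then show ?thesis
    using assms by (simp add: mu_np_def power2_eq_square algebra_simps)
qed

lemma centering_via_share:
  fixes n p m q :: nat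
  assumes n: "n \<ge> 1" and p: "p \<ge> 1"
  defines "\<rho> \<equiv> real n / real (n + p)"
  shows "real n * mu_np n p / real (n + p + q * m + 1)
       = (1 + 2 * sqrt (\<rho> * (1 - \<rho>))) / (1 + real q * (real m / real p) * (1 - \<rho>) + 1 / real (n + p))"
proof -
  define s where "s = real n + real p"
  have s: "s > 0" using n by (simp add: s_def)
  have s_sum: "real (n + p) = s" by (simp add: s_def)
  have one_minus: "1 - \<rho> = real p / s" using s by (simp add: \<rho>_def s_def field_simps)
  have "\<rho> * (1 - \<rho>) = (real n * real p) / s\<^sup>2"
    unfolding one_minus by (simp add: \<rho>_def s_def power2_eq_square)
  then have root: "sqrt (\<rho> * (real p / s)) = sqrt (real n * real p) / s"
    using s by (simp add: one_minus real_sqrt_divide)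
  have num: "1 + 2 * (sqrt (real n * real p) / s) = (s + 2 * sqrt (real n * real p)) / s"
    using s by (simp add: field_simps)
  have den: "1 + real q * (real m / real p) * (real p / s) + 1 / real (n + p)
      = (s + real q * real m + 1) / s"
    using s p unfolding s_sum by (simp add: field_simps)
  show ?thesis
    unfolding mu_np_scaled[OF n p] one_minus root num den using s by (simp add: s_def)
qed

text \<open>The limit constant rewritten through rho = gamma/(1+gamma): both sides equal
  (1 + gamma + 2 sqrt gamma)/(1 + gamma + q kappa); for gamma = oo (rho = 1) both are 1.\<close>
lemma limit_const_via_share:
  assumes "\<gamma> \<ge> 0" and "\<kappa> \<ge> 0"
  defines "\<rho> \<equiv> limit_share \<gamma>"
  shows "limit_const q \<gamma> \<kappa> = (1 + 2 * sqrt (\<rho> * (1 - \<rho>))) / (1 + real q * \<kappa> * (1 - \<rho>))"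
proof (cases "\<gamma> = \<infinity>")
  case False
  define g where "g = real_of_ereal \<gamma>"
  have g: "g \<ge> 0" using assms False by (cases \<gamma>) (auto simp: g_def)
  have \<rho>: "\<rho> = g / (1 + g)" using False by (simp add: \<rho>_def limit_share_def g_def)
  have one_minus: "1 - \<rho> = 1 / (1 + g)" using g by (simp add: \<rho> field_simps)
  have root: "sqrt (g / (1 + g) * (1 / (1 + g))) = sqrt g / (1 + g)"
    using g by (simp add: real_sqrt_divide real_sqrt_mult)
  have pos: "1 + g + real q * \<kappa> > 0" using g assms(2) by (simp add: add_pos_nonneg)
  have "(1 + 2 * sqrt (\<rho> * (1 - \<rho>))) / (1 + real q * \<kappa> * (1 - \<rho>))
      = (1 + 2 * (sqrt g / (1 + g))) / (1 + real q * \<kappa> * (1 / (1 + g)))"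
    unfolding one_minus unfolding \<rho> root ..
  also have "\<dots> = ((1 + g + 2 * sqrt g) / (1 + g)) / ((1 + g + real q * \<kappa>) / (1 + g))"
    using g by (simp add: add_divide_distrib)
  also have "\<dots> = (1 + g + 2 * sqrt g) / (1 + g + real q * \<kappa>)"
    using g by simp
  also have "\<dots> = limit_const q \<gamma> \<kappa>"
    using False pos unfolding limit_const_def g_def[symmetric] by (simp add: field_simps)
  finally show ?thesis ..
qed (simp add: \<rho>_def limit_share_def limit_const_def)

lemma centering_tendsto:
  fixes n p m :: "nat \<Rightarrow> nat" and q :: nat and \<gamma> :: ereal and \<kappa> :: real
  assumes n_lim: "filterlim n at_top sequentially"
    and p_lim: "filterlim p at_top sequentially"
    and gamma_nonneg: "\<gamma> \<ge> 0"
    and np_lim: "((\<lambda>k. ereal (real (n k) / real (p k))) \<longlongrightarrow> \<gamma>) sequentially"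
    and kappa_nonneg: "\<kappa> \<ge> 0"
    and mp_lim: "((\<lambda>k. real (m k) / real (p k)) \<longlongrightarrow> \<kappa>) sequentially"
  shows "((\<lambda>k. real (n k) * mu_np (n k) (p k) / real (n k + p k + q * m k + 1))
            \<longlongrightarrow> limit_const q \<gamma> \<kappa>) sequentially"
proof -
  define \<rho> where "\<rho> = limit_share \<gamma>"
  have "filterlim (\<lambda>k. n k + p k) at_top sequentially"
    by (rule filterlim_at_top_mono[OF n_lim]) simp
  then have inv_sum: "((\<lambda>k. 1 / real (n k + p k)) \<longlongrightarrow> 0) sequentially"
    by (rule inverse_real_tendsto_zero)
  have "0 \<le> 1 - \<rho>" using limit_share_le_1[OF gamma_nonneg] by (simp add: \<rho>_def)
  then have "0 \<le> real q * \<kappa> * (1 - \<rho>)" using kappa_nonneg by simp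
  then have den: "1 + real q * \<kappa> * (1 - \<rho>) + 0 \<noteq> 0" by linarith
  have "((\<lambda>k. (1 + 2 * sqrt (real (n k) / real (n k + p k) * (1 - real (n k) / real (n k + p k)))) /
        (1 + real q * (real (m k) / real (p k)) * (1 - real (n k) / real (n k + p k)) + 1 / real (n k + p k)))
     \<longlongrightarrow> (1 + 2 * sqrt (\<rho> * (1 - \<rho>))) / (1 + real q * \<kappa> * (1 - \<rho>) + 0)) sequentially"
    using share_tendsto[OF p_lim gamma_nonneg np_lim] mp_lim inv_sum den unfolding \<rho>_def
    by (intro tendsto_intros) auto
  then have lim: "((\<lambda>k. (1 + 2 * sqrt (real (n k) / real (n k + p k) * (1 - real (n k) / real (n k + p k)))) /
        (1 + real q * (real (m k) / real (p k)) * (1 - real (n k) / real (n k + p k)) + 1 / real (n k + p k)))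
     \<longlongrightarrow> limit_const q \<gamma> \<kappa>) sequentially"
    using limit_const_via_share[OF gamma_nonneg kappa_nonneg, of q] by (simp add: \<rho>_def)
  have "eventually (\<lambda>k. n k \<ge> 1 \<and> p k \<ge> 1) sequentially"
    using n_lim p_lim by (simp add: filterlim_at_top eventually_conj)
  then have "eventually (\<lambda>k.
      (1 + 2 * sqrt (real (n k) / real (n k + p k) * (1 - real (n k) / real (n k + p k)))) /
        (1 + real q * (real (m k) / real (p k)) * (1 - real (n k) / real (n k + p k)) + 1 / real (n k + p k))
      = real (n k) * mu_np (n k) (p k) / real (n k + p k + q * m k + 1)) sequentially"
    by eventually_elim (rule centering_via_share[symmetric]; simp)
  with lim show ?thesis by (rule Lim_transform_eventually)
qed

lemma sigma_np_pos:
  assumes "n \<ge> 1" "p \<ge> 1"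
  shows "sigma_np n p > 0"
proof -
  have "1 / sqrt (real n) + 1 / sqrt (real p) > 0" using assms by (intro add_pos_pos) auto
  then show ?thesis using assms unfolding sigma_np_def by (intro mult_pos_pos divide_pos_pos add_pos_pos) auto
qed

text \<open>The scale n sigma_np / N is at most 2 (n^(-1/2) + p^(-1/2)), since N >= n, p.\<close>
lemma scale_bound:
  assumes n: "n \<ge> 1" and p: "p \<ge> 1"
  shows "real n * sigma_np n p / real (n + p + q * m + 1) \<le> 2 * (1 / sqrt (real n) + 1 / sqrt (real p))"
proof -
  define N where "N = real (n + p + q * m + 1)"
  define x where "x = 1 / sqrt (real n) + 1 / sqrt (real p)"
  have "1 / sqrt (real n) \<le> 1" "1 / sqrt (real p) \<le> 1" using n p by simp_all
  then have x: "0 \<le> x" "x \<le> 2" unfolding x_def by (auto intro: add_nonneg_nonneg)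
  have root: "x powr (1/3) \<le> 2"
  proof (cases "x \<le> 1")
    case True then show ?thesis using powr_le1[of "1/3" x] x by simp
  next
    case False
    then have "x powr (1/3) \<le> x powr 1" by (intro powr_mono) auto
    then show ?thesis using x by simp
  qed
  have over: "sqrt (real k) / N \<le> 1 / sqrt (real k)" if "k \<ge> 1" "real k \<le> N" for k :: nat
  proof -
    have "sqrt (real k) / N \<le> sqrt (real k) / real k" using that by (intro divide_left_mono) auto
    also have "\<dots> = 1 / sqrt (real k)" using sqrt_divide_self_eq[of "real k"] by (simp add: inverse_eq_divide)
    finally show ?thesis .
  qed
  have "real n * sigma_np n p / N = (sqrt (real n) + sqrt (real p)) * x powr (1/3) / N"
    using n unfolding sigma_np_def x_def by simp
  also have "\<dots> \<le> (sqrt (real n) + sqrt (real p)) * 2 / N"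
    using root by (intro divide_right_mono mult_left_mono) (auto simp: N_def)
  also have "\<dots> = 2 * (sqrt (real n) / N + sqrt (real p) / N)" by (simp add: add_divide_distrib algebra_simps)
  also have "\<dots> \<le> 2 * x" unfolding x_def using over[OF n] over[OF p] by (simp add: N_def)
  finally show ?thesis by (simp add: N_def x_def)
qed

lemma scale_tendsto_zero:
  assumes n_lim: "filterlim n at_top sequentially" and p_lim: "filterlim p at_top sequentially"
  shows "((\<lambda>k. real (n k) * sigma_np (n k) (p k) / real (n k + p k + q * m k + 1)) \<longlongrightarrow> 0) sequentially"
proof (rule tendsto_sandwich)
  have ev: "eventually (\<lambda>k. n k \<ge> 1 \<and> p k \<ge> 1) sequentially"
    using n_lim p_lim by (simp add: filterlim_at_top eventually_conj)
  show "eventually (\<lambda>k. 0 \<le> real (n k) * sigma_np (n k) (p k) / real (n k + p k + q * m k + 1)) sequentially"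
    using ev by eventually_elim (simp add: less_imp_le sigma_np_pos)
  show "eventually (\<lambda>k. real (n k) * sigma_np (n k) (p k) / real (n k + p k + q * m k + 1)
          \<le> 2 * (1 / sqrt (real (n k)) + 1 / sqrt (real (p k)))) sequentially"
    using ev by eventually_elim (intro scale_bound; simp)
  show "((\<lambda>k. 2 * (1 / sqrt (real (n k)) + 1 / sqrt (real (p k)))) \<longlongrightarrow> 0) sequentially"
    using tendsto_mult[OF tendsto_const tendsto_add[OF inverse_sqrt_tendsto_zero[OF n_lim]
        inverse_sqrt_tendsto_zero[OF p_lim]], of 2] by simp
qed simp

lemma map_lambda_max_deviation:
  fixes t \<alpha> c :: real and n p m q :: nat and x :: "nat \<Rightarrow> nat \<Rightarrow> real"
  assumes q: "q \<ge> 1" and \<alpha>: "\<alpha> > 0" and n: "n \<ge> 1" and p: "p \<ge> 1" and t: "t > 0"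
    and tq: "real q * \<alpha> ^ q \<le> real (n + p + q * m + 1) * t ^ q"
  defines "N \<equiv> real (n + p + q * m + 1)"
    and "Z \<equiv> (lambda_max (sample_cov n p x) - mu_np n p) / sigma_np n p"
  shows "\<bar>map_lambda_max n p m q \<alpha> (sample_cov n p x) - c\<bar>
           \<le> t + \<bar>real n * mu_np n p / N - c\<bar> + real n * sigma_np n p / N * \<bar>Z\<bar>"
proof -
  define est where "est = map_lambda_max n p m q \<alpha> (sample_cov n p x)"
  define \<Lambda> where "\<Lambda> = lambda_max (sample_cov n p x)"
  define b where "b = real n * sigma_np n p / N"
  have \<sigma>: "sigma_np n p > 0" using n p by (rule sigma_np_pos)
  have "N > 0" unfolding N_def by (rule of_nat_0_less_iff[THEN iffD2]) simp
  then have b: "b \<ge> 0" and decomp: "real n * \<Lambda> / N = real n * mu_np n p / N + b * Z"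
    using \<sigma> by (simp_all add: Z_def b_def \<Lambda>_def field_simps)
  have close: "\<bar>est - real n * \<Lambda> / N\<bar> \<le> t"
    unfolding est_def \<Lambda>_def N_def using map_lambda_max_close[OF q \<alpha> n p t tq] .
  have "est - c = ((est - real n * \<Lambda> / N) + b * Z) + (real n * mu_np n p / N - c)"
    using decomp by linarith
  then have "\<bar>est - c\<bar> \<le> \<bar>(est - real n * \<Lambda> / N) + b * Z\<bar> + \<bar>real n * mu_np n p / N - c\<bar>"
    by (simp only: abs_triangle_ineq)
  also have "\<dots> \<le> \<bar>est - real n * \<Lambda> / N\<bar> + \<bar>b * Z\<bar> + \<bar>real n * mu_np n p / N - c\<bar>"
    by (intro add_right_mono abs_triangle_ineq)
  finally have "\<bar>est - c\<bar> \<le> \<bar>est - real n * \<Lambda> / N\<bar> + \<bar>b * Z\<bar> + \<bar>real n * mu_np n p / N - c\<bar>" .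
  moreover have "\<bar>b * Z\<bar> = b * \<bar>Z\<bar>" using b by (simp add: abs_mult)
  ultimately show ?thesis using close unfolding est_def b_def by linarith
qed

lemma map_lambda_max_near_limit:
  fixes q :: nat and \<alpha> K \<epsilon> \<kappa> :: real and \<gamma> :: ereal and n p m :: "nat \<Rightarrow> nat"
  assumes q_pos: "q \<ge> 1" and alpha_pos: "\<alpha> > 0"
    and n_lim: "filterlim n at_top sequentially"
    and p_lim: "filterlim p at_top sequentially"
    and gamma_nonneg: "\<gamma> \<ge> 0"
    and np_lim: "((\<lambda>k. ereal (real (n k) / real (p k))) \<longlongrightarrow> \<gamma>) sequentially"
    and kappa_nonneg: "\<kappa> \<ge> 0"
    and mp_lim: "((\<lambda>k. real (m k) / real (p k)) \<longlongrightarrow> \<kappa>) sequentially"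
    and K: "K > 0" and \<epsilon>: "\<epsilon> > 0"
  shows "\<forall>\<^sub>F k in sequentially. \<forall>x.
           \<bar>(lambda_max (sample_cov (n k) (p k) x) - mu_np (n k) (p k)) / sigma_np (n k) (p k)\<bar> \<le> K \<longrightarrow>
           \<bar>map_lambda_max (n k) (p k) (m k) q \<alpha> (sample_cov (n k) (p k) x) - limit_const q \<gamma> \<kappa>\<bar> \<le> \<epsilon>"
proof -
  define t where "t = \<epsilon> / 3"
  have t: "t > 0" using \<epsilon> by (simp add: t_def)
  define N where "N = (\<lambda>k. real (n k + p k + q * m k + 1))"
  have ev_dims: "eventually (\<lambda>k. n k \<ge> 1 \<and> p k \<ge> 1) sequentially"
    using n_lim p_lim by (simp add: filterlim_at_top eventually_conj)
  have "eventually (\<lambda>k. real q * \<alpha> ^ q / t ^ q \<le> real (n k)) sequentially"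
    using filterlim_compose[OF filterlim_real_sequentially n_lim] by (simp add: filterlim_at_top)
  then have ev_root: "eventually (\<lambda>k. real q * \<alpha> ^ q \<le> N k * t ^ q) sequentially"
  proof eventually_elim
    case (elim k)
    have "real (n k) \<le> N k" by (simp add: N_def)
    then have "real q * \<alpha> ^ q / t ^ q \<le> N k" using elim by linarith
    then show ?case using t by (simp add: pos_divide_le_eq)
  qed
  have ev_center: "eventually (\<lambda>k. \<bar>real (n k) * mu_np (n k) (p k) / N k - limit_const q \<gamma> \<kappa>\<bar> < t) sequentially"
    using tendstoD[OF centering_tendsto[OF n_lim p_lim gamma_nonneg np_lim kappa_nonneg mp_lim] t]
    unfolding N_def dist_real_def .
  have ev_scale: "eventually (\<lambda>k. real (n k) * sigma_np (n k) (p k) / N k < t / K) sequentially"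
    using scale_tendsto_zero[OF n_lim p_lim] t K unfolding N_def by (intro order_tendstoD) auto
  show ?thesis
    using ev_dims ev_root ev_center ev_scale
  proof eventually_elim
    case (elim k)
    show ?case
    proof (intro allI impI)
      fix x
      assume Z: "\<bar>(lambda_max (sample_cov (n k) (p k) x) - mu_np (n k) (p k)) / sigma_np (n k) (p k)\<bar> \<le> K"
      have "real (n k) * sigma_np (n k) (p k) / N k * K < t"
        using elim(4) K by (simp add: pos_less_divide_eq)
      moreover have "real (n k) * sigma_np (n k) (p k) / N k \<ge> 0"
        using elim(1) by (simp add: N_def less_imp_le sigma_np_pos)
      ultimately have "real (n k) * sigma_np (n k) (p k) / N k *
          \<bar>(lambda_max (sample_cov (n k) (p k) x) - mu_np (n k) (p k)) / sigma_np (n k) (p k)\<bar> < t"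
        using Z by (meson le_less_trans mult_left_mono)
      then show "\<bar>map_lambda_max (n k) (p k) (m k) q \<alpha> (sample_cov (n k) (p k) x)
          - limit_const q \<gamma> \<kappa>\<bar> \<le> \<epsilon>"
        using map_lambda_max_deviation[OF q_pos alpha_pos _ _ t, of "n k" "p k" "m k" x "limit_const q \<gamma> \<kappa>"]
          elim(1,2,3) unfolding N_def t_def by linarith
    qed
  qed
qed

section \<open>Tightness of a weakly convergent sequence\<close>

text \<open>A limit distribution puts mass > 1 - eta on some window (-K, K] whose endpoints are
  continuity points of its distribution function (the atoms are countable).\<close>
lemma continuity_window:
  fixes L :: "real measure" and \<eta> :: real
  assumes L: "real_distribution L" and \<eta>: "\<eta> > 0"
  shows "\<exists>K>0. isCont (cdf L) K \<and> isCont (cdf L) (- K) \<and> cdf L K - cdf L (- K) > 1 - \<eta>"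
proof -
  interpret real_distribution L by (rule L)
  have "eventually (\<lambda>x. cdf L x > 1 - \<eta>/2) at_top"
    using cdf_lim_at_top_prob \<eta> by (intro order_tendstoD) auto
  then obtain A where A: "\<And>x. x \<ge> A \<Longrightarrow> cdf L x > 1 - \<eta>/2" by (auto simp: eventually_at_top_linorder)
  have "eventually (\<lambda>x. cdf L x < \<eta>/2) at_bot"
    using cdf_lim_at_bot \<eta> by (intro order_tendstoD) auto
  then obtain B where B: "\<And>x. x \<le> B \<Longrightarrow> cdf L x < \<eta>/2" by (auto simp: eventually_at_bot_linorder)
  define lo where "lo = max (max A (- B)) 0"
  define atoms where "atoms = {x. measure L {x} > 0}"
  have "countable (atoms \<union> uminus ` atoms)" unfolding atoms_def using countable_atoms by auto
  then have "\<not> {lo<..<lo+1} \<subseteq> atoms \<union> uminus ` atoms"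
    using uncountable_open_interval[of lo "lo + 1"] countable_subset by auto
  then obtain K where K: "lo < K" "K \<notin> atoms" "- K \<notin> atoms"
    by (auto simp: subset_iff image_iff) (metis minus_minus)
  have "isCont (cdf L) K" "isCont (cdf L) (- K)"
    using K isCont_cdf measure_nonneg[of L] unfolding atoms_def by (auto simp: le_less)
  moreover have "cdf L K > 1 - \<eta>/2" "cdf L (- K) < \<eta>/2" "K > 0"
    using K(1) A B unfolding lo_def by auto
  ultimately show ?thesis by (intro exI[of _ K]) auto
qed

text \<open>The image measure of an arbitrary (possibly non-measurable) map: if it gives positive mass
  to (a, b] then the preimage is an event of the same probability.\<close>
lemma distr_interval_preimage:
  fixes f :: "'a \<Rightarrow> real" and a b :: real
  assumes M: "prob_space M" and ab: "a \<le> b"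
  shows "measure (distr M borel f) {a<..b} = cdf (distr M borel f) b - cdf (distr M borel f) a"
    and "measure (distr M borel f) {a<..b} > 0 \<Longrightarrow>
          {\<omega> \<in> space M. a < f \<omega> \<and> f \<omega> \<le> b} \<in> sets M \<and>
          measure M {\<omega> \<in> space M. a < f \<omega> \<and> f \<omega> \<le> b} = measure (distr M borel f) {a<..b}"
proof -
  define D where "D = distr M borel f"
  have image_cases: "emeasure D B = 0 \<or> emeasure D B = emeasure M (f -` B \<inter> space M)" for B
    unfolding D_def distr_def emeasure_measure_of_conv by auto
  have "emeasure D (space D) \<le> 1"
    using image_cases[of "space D"] prob_space.emeasure_le_1[OF M] by auto
  then have "finite_measure D"
    by (intro finite_measureI) (auto simp: top_unique)
  then have "measure D ({..b} - {..a}) = measure D {..b} - measure D {..a}"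
    using ab by (intro finite_measure.finite_measure_Diff) (auto simp: D_def)
  moreover have "{..b} - {..a} = {a<..b}" by auto
  ultimately show "measure (distr M borel f) {a<..b} = cdf (distr M borel f) b - cdf (distr M borel f) a"
    by (simp add: D_def cdf_def)
  assume "measure (distr M borel f) {a<..b} > 0"
  then have "emeasure D {a<..b} \<noteq> 0" by (auto simp: D_def measure_def)
  moreover have "f -` {a<..b} \<inter> space M = {\<omega> \<in> space M. a < f \<omega> \<and> f \<omega> \<le> b}" by auto
  ultimately have e: "emeasure D {a<..b} = emeasure M {\<omega> \<in> space M. a < f \<omega> \<and> f \<omega> \<le> b}"
    and "emeasure M {\<omega> \<in> space M. a < f \<omega> \<and> f \<omega> \<le> b} \<noteq> 0"
    using image_cases[of "{a<..b}"] by auto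
  then show "{\<omega> \<in> space M. a < f \<omega> \<and> f \<omega> \<le> b} \<in> sets M \<and>
          measure M {\<omega> \<in> space M. a < f \<omega> \<and> f \<omega> \<le> b} = measure (distr M borel f) {a<..b}"
    using emeasure_notin_sets by (auto simp: measure_def D_def)
qed

lemma bad_event_vanishes_by_tightness:
  fixes M :: "nat \<Rightarrow> 'a measure" and Z :: "nat \<Rightarrow> 'a \<Rightarrow> real" and Bad :: "nat \<Rightarrow> 'a \<Rightarrow> bool"
  assumes prob: "\<And>k. prob_space (M k)"
    and L: "real_distribution L"
    and conv: "weak_conv_m (\<lambda>k. distr (M k) borel (Z k)) L"
    and excluded: "\<And>K. K > 0 \<Longrightarrow>
        \<forall>\<^sub>F k in sequentially. \<forall>\<omega>\<in>space (M k). \<bar>Z k \<omega>\<bar> \<le> K \<longrightarrow> \<not> Bad k \<omega>"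
  shows "((\<lambda>k. measure (M k) {\<omega> \<in> space (M k). Bad k \<omega>}) \<longlongrightarrow> 0) sequentially"
proof (rule order_tendstoI)
  fix a :: real assume "a < 0"
  then show "eventually (\<lambda>k. a < measure (M k) {\<omega> \<in> space (M k). Bad k \<omega>}) sequentially"
    by (intro always_eventually allI) (simp add: less_le_trans[OF _ measure_nonneg])
next
  fix \<eta> :: real assume "\<eta> > 0"
  define \<eta>' where "\<eta>' = min \<eta> 1"
  have \<eta>': "\<eta>' > 0" "\<eta>' \<le> 1" "\<eta>' \<le> \<eta>" using \<open>\<eta> > 0\<close> by (auto simp: \<eta>'_def)
  define D where "D = (\<lambda>k. distr (M k) borel (Z k))"
  obtain K where K: "K > 0" "isCont (cdf L) K" "isCont (cdf L) (- K)" "cdf L K - cdf L (- K) > 1 - \<eta>'"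
    using continuity_window[OF L \<eta>'(1)] by auto
  have "((\<lambda>k. cdf (D k) K - cdf (D k) (- K)) \<longlongrightarrow> cdf L K - cdf L (- K)) sequentially"
    using conv K(2,3) unfolding weak_conv_m_def weak_conv_def D_def by (intro tendsto_diff) blast+
  then have ev_mass: "eventually (\<lambda>k. cdf (D k) K - cdf (D k) (- K) > 1 - \<eta>') sequentially"
    using K(4) by (rule order_tendstoD)
  show "eventually (\<lambda>k. measure (M k) {\<omega> \<in> space (M k). Bad k \<omega>} < \<eta>) sequentially"
    using ev_mass excluded[OF K(1)]
  proof eventually_elim
    case (elim k)
    interpret prob_space "M k" by (rule prob)
    define C where "C = {\<omega> \<in> space (M k). - K < Z k \<omega> \<and> Z k \<omega> \<le> K}"
    have K_le: "- K \<le> K" using K(1) by simp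
    note window = distr_interval_preimage[OF prob K_le, of k "Z k"]
    have mass: "measure (D k) {-K<..K} = cdf (D k) K - cdf (D k) (- K)"
      unfolding D_def by (rule window(1))
    then have "measure (D k) {-K<..K} > 0" using elim(1) \<eta>'(2) by simp
    then have C: "C \<in> events" "prob C = cdf (D k) K - cdf (D k) (- K)"
      using window(2) mass unfolding C_def D_def by auto
    have bad_outside: "{\<omega> \<in> space (M k). Bad k \<omega>} \<subseteq> space (M k) - C"
      using elim(2) by (auto simp: C_def)
    have "measure (M k) {\<omega> \<in> space (M k). Bad k \<omega>} \<le> prob (space (M k) - C)"
    proof (cases "{\<omega> \<in> space (M k). Bad k \<omega>} \<in> events")
      case True
      then show ?thesis using bad_outside C(1) by (intro finite_measure_mono) auto
    qed (simp add: measure_notin_sets)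
    also have "\<dots> = 1 - prob C" using C(1) by (rule prob_compl)
    finally show ?case using C(2) elim(1) \<eta>'(3) by simp
  qed
qed

theorem mainTheorem11:
  fixes q :: nat and \<alpha> :: real and \<gamma> :: ereal and \<kappa> :: real
    and n p m :: "nat \<Rightarrow> nat"
    and M :: "nat \<Rightarrow> 'a measure"
    and X :: "nat \<Rightarrow> nat \<Rightarrow> nat \<Rightarrow> 'a \<Rightarrow> real"
  assumes q_pos: "q \<ge> 1"
    and alpha_pos: "\<alpha> > 0"
    and n_lim: "filterlim n at_top sequentially"
    and p_lim: "filterlim p at_top sequentially"
    and gamma_nonneg: "\<gamma> \<ge> 0"
    and np_lim: "((\<lambda>k. ereal (real (n k) / real (p k))) \<longlongrightarrow> \<gamma>) sequentially"
    and kappa_ge: "\<kappa> \<ge> 1"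
    and mp_lim: "((\<lambda>k. real (m k) / real (p k)) \<longlongrightarrow> \<kappa>) sequentially"
    and m_ge_p: "\<And>k. m k \<ge> p k"
    and prob: "\<And>k. prob_space (M k)"
    and indep: "\<And>k. prob_space.indep_vars (M k) (\<lambda>_. borel) (\<lambda>(i, j). X k i j)
                        ({..<n k} \<times> {..<p k})"
    and gauss: "\<And>k i j. i < n k \<Longrightarrow> j < p k \<Longrightarrow>
                   distributed (M k) lborel (X k i j) std_normal_density"
    and tw: "\<exists>L. real_distribution L \<and>
               weak_conv_m (\<lambda>k. distr (M k) borel (\<lambda>\<omega>.
                 (lambda_max (sample_cov (n k) (p k) (\<lambda>i j. X k i j \<omega>)) - mu_np (n k) (p k))
                   / sigma_np (n k) (p k))) L"
  shows "\<forall>\<epsilon>>0. ((\<lambda>k. measure (M k) {\<omega> \<in> space (M k).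
            \<bar>map_lambda_max (n k) (p k) (m k) q \<alpha> (sample_cov (n k) (p k) (\<lambda>i j. X k i j \<omega>))
               - limit_const q \<gamma> \<kappa>\<bar> > \<epsilon>}) \<longlongrightarrow> 0) sequentially"
proof (intro allI impI)
  fix \<epsilon> :: real assume \<epsilon>: "\<epsilon> > 0"
  obtain L where L: "real_distribution L" and conv: "weak_conv_m (\<lambda>k. distr (M k) borel (\<lambda>\<omega>.
      (lambda_max (sample_cov (n k) (p k) (\<lambda>i j. X k i j \<omega>)) - mu_np (n k) (p k))
        / sigma_np (n k) (p k))) L"
    using tw by blast
  have kappa_nonneg: "\<kappa> \<ge> 0" using kappa_ge by simp
  note near = map_lambda_max_near_limit[OF q_pos alpha_pos n_lim p_lim gamma_nonneg np_lim
      kappa_nonneg mp_lim _ \<epsilon>]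
  show "((\<lambda>k. measure (M k) {\<omega> \<in> space (M k).
            \<bar>map_lambda_max (n k) (p k) (m k) q \<alpha> (sample_cov (n k) (p k) (\<lambda>i j. X k i j \<omega>))
               - limit_const q \<gamma> \<kappa>\<bar> > \<epsilon>}) \<longlongrightarrow> 0) sequentially"
  proof (rule bad_event_vanishes_by_tightness[OF prob L conv])
    fix K :: real assume "K > 0"
    from near[OF this] show "\<forall>\<^sub>F k in sequentially. \<forall>\<omega>\<in>space (M k).
        \<bar>(lambda_max (sample_cov (n k) (p k) (\<lambda>i j. X k i j \<omega>)) - mu_np (n k) (p k)) / sigma_np (n k) (p k)\<bar> \<le> K
        \<longrightarrow> \<not> \<epsilon> < \<bar>map_lambda_max (n k) (p k) (m k) q \<alpha> (sample_cov (n k) (p k) (\<lambda>i j. X k i j \<omega>))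
               - limit_const q \<gamma> \<kappa>\<bar>"
      by eventually_elim (auto simp: not_less)
  qed
qed

end
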